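(* Let $n\in\mathbb{N}$, $\mathcal{R}\subset\mathcal{H}_n$ non-empty, $\mathbb{T}$ a generator set of $\mathcal{R}$, and $A\subset[n]$ non-empty. Set $\mathcal{G}_0=\mathcal{O}_A$ and fix $|\psi_0\rangle\in\mathcal{R}$. For $q=1,2,\dots$, as long as $\mathcal{G}(\mathbb{T})\setminus\bigcup_{i=0}^{q-1}\mathcal{G}_i\neq\emptyset$, choose $P_q$ in this set and put $\mathcal{G}_q=\{P_qP : P\in\mathcal{G}_0\}$; let $m$ be the largest $q$ for which this choice was made ($m=0$ if none). Put $\mathcal{R}_i=\{P|\psi_0\rangle : P\in\mathcal{G}_i\}$ for $i=0,\dots,m$. Then $\mathcal{R}/{\sim_A}=\{\mathcal{R}_0,\dots,\mathcal{R}_m\}$. Moreover, if all elements of $\mathbb{T}$ are self-inverse and $\mathbb{T}$ is pointwise-disjoint, then every equivalence class in $\mathcal{R}/{\sim_A}$ has cardinality $|\mathcal{O}_A|$.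
   Context: $[n]=\{1,\dots,n\}$; $\mathcal{H}_n$ is the computational basis of $n$ qubits. For $|\psi\rangle=|a_1\dots a_n\rangle$ and non-empty $A=\{i_1<\dots<i_m\}$, $|\psi_A\rangle=|a_{i_1}\dots a_{i_m}\rangle$. $|\psi\rangle\sim_A|\phi\rangle$ iff $|\psi_A\rangle=|\phi_A\rangle$ (for $|\psi\rangle,|\phi\rangle\in\mathcal{R}$); $\mathcal{R}/{\sim_A}$ is its set of classes. For a set $F$ of maps $\mathcal{R}\to\mathcal{R}$, $\mathcal{G}(F)$ is its closure under composition. $\mathbb{T}$ (a set of maps $\mathcal{R}\to\mathcal{R}$) is a generator set of $\mathcal{R}$ if: (i) all elements of $\mathcal{G}(\mathbb{T})$ commute pairwise; (ii) for all $|\psi\rangle,|\phi\rangle\in\mathcal{R}$ some $P\in\mathcal{G}(\mathbb{T})$ has $P|\psi\rangle=|\phi\rangle$; (iii) for every $P\in\mathbb{T}$ and non-empty $B\subset[n]$, if $(P|\psi\rangle)_B=|\psi_B\rangle$ for some $|\psi\rangle\in\mathcal{R}$ then $(P|\phi\rangle)_B=|\phi_B\rangle$ for all $|\phi\rangle\in\mathcal{R}$. $\mathbb{T}$ is pointwise-disjoint if for all $P,T\in\mathcal{G}(\mathbb{T})$, $P|\psi\rangle=T|\psi\rangle$ for some $|\psi\rangle\in\mathcal{R}$ implies $P=T$. $\mathcal{O}_A=\{P\in\mathcal{G}(\mathbb{T}) : (P|\psi\rangle)_A=|\psi_A\rangle\ \forall|\psi\rangle\in\mathcal{R}\}$. 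*)

theory Defs
  imports Main
begin

text \<open>Computational basis states of n qubits are bit strings of length n
  (bool lists). Qubit positions are 1..n; position i is list index i - 1.\<close>

definition basis :: "nat \<Rightarrow> bool list set" where
  "basis n = {xs. length xs = n}"

definition sub :: "nat set \<Rightarrow> bool list \<Rightarrow> bool list" where
  "sub A psi = map (\<lambda>i. psi ! (i - 1)) (sorted_list_of_set A)"

definition simA :: "bool list set \<Rightarrow> nat set \<Rightarrow> (bool list \<times> bool list) set" where
  "simA R A = {(x, y). x \<in> R \<and> y \<in> R \<and> sub A x = sub A y}"

inductive_set gen :: "('a \<Rightarrow> 'a) set \<Rightarrow> ('a \<Rightarrow> 'a) set" for F where
  base: "P \<in> F \<Longrightarrow> P \<in> gen F"
| comp: "P \<in> gen F \<Longrightarrow> Q \<in> gen F \<Longrightarrow> P \<circ> Q \<in> gen F"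

text \<open>A map R \<rightarrow> R, represented canonically as a HOL function that is the identity
  outside R (so that equality of maps R \<rightarrow> R is HOL equality).\<close>
definition map_on :: "'a set \<Rightarrow> ('a \<Rightarrow> 'a) \<Rightarrow> bool" where
  "map_on R P \<longleftrightarrow> P ` R \<subseteq> R \<and> (\<forall>x. x \<notin> R \<longrightarrow> P x = x)"

definition generator_set :: "nat \<Rightarrow> bool list set \<Rightarrow> (bool list \<Rightarrow> bool list) set \<Rightarrow> bool" where
  "generator_set n R T \<longleftrightarrow>
     (\<forall>P\<in>T. map_on R P) \<and>
     (\<forall>P\<in>gen T. \<forall>Q\<in>gen T. P \<circ> Q = Q \<circ> P) \<and>
     (\<forall>psi\<in>R. \<forall>phi\<in>R. \<exists>P\<in>gen T. P psi = phi) \<and>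
     (\<forall>P\<in>T. \<forall>B. B \<noteq> {} \<and> B \<subseteq> {1..n} \<longrightarrow>
        (\<exists>psi\<in>R. sub B (P psi) = sub B psi) \<longrightarrow> (\<forall>phi\<in>R. sub B (P phi) = sub B phi))"

definition pointwise_disjoint :: "'a set \<Rightarrow> ('a \<Rightarrow> 'a) set \<Rightarrow> bool" where
  "pointwise_disjoint R T \<longleftrightarrow>
     (\<forall>P\<in>gen T. \<forall>Q\<in>gen T. (\<exists>psi\<in>R. P psi = Q psi) \<longrightarrow> P = Q)"

definition orbA :: "bool list set \<Rightarrow> (bool list \<Rightarrow> bool list) set \<Rightarrow> nat set
     \<Rightarrow> (bool list \<Rightarrow> bool list) set" where
  "orbA R T A = {P \<in> gen T. \<forall>psi\<in>R. sub A (P psi) = sub A psi}"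

end

theory Submission
  imports Defs
begin

text \<open>Condition (iii) of a generator set, applied to the singletons B = {i}, says that each
  generator either fixes qubit i on all of R or flips it on all of R, and this dichotomy survives
  composition. Hence whether a map in gen T fixes the qubits in A can be tested at a single state,
  so the class of a state x is the orbit of x under orbA R T A. Since gen T is abelian and
  transitive on R, a map in gen T is determined by its value at one state: this makes
  Q \<mapsto> Q x injective on orbA R T A, and it turns the translate of orbA R T A by P q,
  applied to psi0, into orbA R T A applied to P q psi0, i.e. into the class of P q psi0.\<close>

lemma map_on_gen:
  assumes "\<forall>P\<in>T. map_on R P" and "P \<in> gen T"
  shows "map_on R P"
  using assms(2)
proof (induction rule: gen.induct)
  case (base P)
  then show ?case using assms(1) by blast
next
  case (comp P Q)
  then show ?case unfolding map_on_def by (auto simp: image_subset_iff)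
qed

lemma gen_preserves_or_negates:
  fixes f :: "'a \<Rightarrow> bool"
  assumes "\<forall>P\<in>T. map_on R P"
    and "\<forall>P\<in>T. (\<forall>x\<in>R. f (P x) = f x) \<or> (\<forall>x\<in>R. f (P x) \<noteq> f x)"
    and "P \<in> gen T"
  shows "(\<forall>x\<in>R. f (P x) = f x) \<or> (\<forall>x\<in>R. f (P x) \<noteq> f x)"
  using assms(3)
proof (induction rule: gen.induct)
  case (base P)
  then show ?case using assms(2) by blast
next
  case (comp P Q)
  have "Q x \<in> R" if "x \<in> R" for x
    using map_on_gen[OF assms(1) comp.hyps(2)] that unfolding map_on_def by blast
  with comp.IH show ?case by auto
qed

lemma sub_eq_iff:
  assumes "finite A"
  shows "sub A x = sub A y \<longleftrightarrow> (\<forall>i\<in>A. x ! (i - 1) = y ! (i - 1))"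
  using assms unfolding sub_def by simp

lemma generator_set_generators_map_on: "generator_set n R T \<Longrightarrow> \<forall>P\<in>T. map_on R P"
  unfolding generator_set_def by (elim conjE)

lemma generator_set_map_on: "generator_set n R T \<Longrightarrow> P \<in> gen T \<Longrightarrow> map_on R P"
  using map_on_gen generator_set_generators_map_on by blast

lemma generator_set_mem:
  "generator_set n R T \<Longrightarrow> P \<in> gen T \<Longrightarrow> x \<in> R \<Longrightarrow> P x \<in> R"
  using generator_set_map_on unfolding map_on_def by blast

lemma generator_set_commute:
  "generator_set n R T \<Longrightarrow> P \<in> gen T \<Longrightarrow> Q \<in> gen T \<Longrightarrow> P (Q x) = Q (P x)"
  unfolding generator_set_def by (elim conjE) (metis comp_apply)

lemma generator_set_transitive:
  "generator_set n R T \<Longrightarrow> x \<in> R \<Longrightarrow> y \<in> R \<Longrightarrow> \<exists>P\<in>gen T. P x = y"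
  unfolding generator_set_def by (elim conjE) blast

lemma generator_set_fixes_everywhere:
  assumes "generator_set n R T" and "P \<in> T" and "B \<noteq> {}" and "B \<subseteq> {1..n}"
    and "x \<in> R" and "sub B (P x) = sub B x" and "y \<in> R"
  shows "sub B (P y) = sub B y"
  using assms unfolding generator_set_def by (elim conjE) blast

lemma generator_set_fixes_or_flips_qubit:
  assumes gs: "generator_set n R T" and "P \<in> gen T" and i: "i \<in> {1..n}"
  shows "(\<forall>x\<in>R. P x ! (i - 1) = x ! (i - 1)) \<or> (\<forall>x\<in>R. P x ! (i - 1) \<noteq> x ! (i - 1))"
proof (rule gen_preserves_or_negates[OF generator_set_generators_map_on[OF gs] _ assms(2)])
  have sub_i: "sub {i} y = [y ! (i - 1)]" for y
    unfolding sub_def by simp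
  show "\<forall>P\<in>T. (\<forall>x\<in>R. P x ! (i - 1) = x ! (i - 1)) \<or> (\<forall>x\<in>R. P x ! (i - 1) \<noteq> x ! (i - 1))"
    using generator_set_fixes_everywhere[OF gs _ _ _ _ _, of _ "{i}"] i
    by (auto simp: sub_i)
qed

lemma orbA_iff:
  assumes gs: "generator_set n R T" and A: "A \<subseteq> {1..n}" and P: "P \<in> gen T" and "x \<in> R"
  shows "P \<in> orbA R T A \<longleftrightarrow> sub A (P x) = sub A x"
proof -
  have "finite A"
    using A finite_subset by blast
  have "sub A (P y) = sub A y" if "sub A (P x) = sub A x" and "y \<in> R" for y
    using that \<open>x \<in> R\<close> A generator_set_fixes_or_flips_qubit[OF gs P]
    unfolding sub_eq_iff[OF \<open>finite A\<close>] by blast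
  then show ?thesis
    using P \<open>x \<in> R\<close> unfolding orbA_def by blast
qed

lemma generator_set_pointwise_disjoint:
  assumes "generator_set n R T"
  shows "pointwise_disjoint R T"
  unfolding pointwise_disjoint_def
proof (intro ballI impI)
  fix P Q assume P: "P \<in> gen T" and Q: "Q \<in> gen T" and "\<exists>x\<in>R. P x = Q x"
  then obtain x where x: "x \<in> R" "P x = Q x" by blast
  show "P = Q"
  proof
    fix y show "P y = Q y"
    proof (cases "y \<in> R")
      case True
      then obtain S where S: "S \<in> gen T" "S x = y"
        using generator_set_transitive[OF assms x(1)] by blast
      then show ?thesis
        using generator_set_commute[OF assms] P Q x(2) by metis
    next
      case False
      then show ?thesis
        using generator_set_map_on[OF assms] P Q unfolding map_on_def by metis
    qed
  qed
qed

lemma simA_class: "x \<in> R \<Longrightarrow> simA R A `` {x} = {y \<in> R. sub A x = sub A y}"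
  unfolding simA_def by auto

lemma equiv_simA: "equiv R (simA R A)"
  unfolding equiv_def refl_on_def sym_def trans_def simA_def by auto

lemma quotient_eq_if_classes_cover:
  assumes "equiv R r" and "\<And>i. i \<in> I \<Longrightarrow> C i \<in> R // r" and "R \<subseteq> (\<Union>i\<in>I. C i)"
  shows "R // r = C ` I"
proof
  show "R // r \<subseteq> C ` I"
  proof
    fix X assume X: "X \<in> R // r"
    then obtain y where "y \<in> X"
      using in_quotient_imp_non_empty[OF assms(1)] by blast
    moreover from this obtain i where "i \<in> I" "y \<in> C i"
      using X in_quotient_imp_subset[OF assms(1)] assms(3) by blast
    ultimately have "X = C i"
      using quotient_disj[OF assms(1) X assms(2)] by blast
    with \<open>i \<in> I\<close> show "X \<in> C ` I" by blast
  qed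
  show "C ` I \<subseteq> R // r"
    using assms(2) by blast
qed

lemma simA_class_eq_orbit:
  assumes "generator_set n R T" and "A \<subseteq> {1..n}" and "x \<in> R"
  shows "simA R A `` {x} = (\<lambda>Q. Q x) ` orbA R T A"
proof
  show "simA R A `` {x} \<subseteq> (\<lambda>Q. Q x) ` orbA R T A"
  proof
    fix y assume "y \<in> simA R A `` {x}"
    then have y: "y \<in> R" "sub A x = sub A y"
      using simA_class[OF assms(3)] by auto
    then obtain Q where "Q \<in> gen T" "Q x = y"
      using generator_set_transitive[OF assms(1,3)] by blast
    with y show "y \<in> (\<lambda>Q. Q x) ` orbA R T A"
      using orbA_iff[OF assms(1,2) _ assms(3)] by force
  qed
  show "(\<lambda>Q. Q x) ` orbA R T A \<subseteq> simA R A `` {x}"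
    using simA_class[OF assms(3)] generator_set_mem[OF assms(1)] assms(3)
    unfolding orbA_def by auto
qed

lemma simA_class_eq_translated_orbit:
  assumes "generator_set n R T" and "A \<subseteq> {1..n}" and "S \<in> gen T" and "x \<in> R"
  shows "(\<lambda>Q. (S \<circ> Q) x) ` orbA R T A = simA R A `` {S x}"
proof -
  have "(\<lambda>Q. (S \<circ> Q) x) ` orbA R T A = (\<lambda>Q. Q (S x)) ` orbA R T A"
    using generator_set_commute[OF assms(1,3)] unfolding orbA_def by auto
  also have "\<dots> = simA R A `` {S x}"
    using simA_class_eq_orbit generator_set_mem assms by metis
  finally show ?thesis .
qed

lemma card_simA_class:
  assumes "generator_set n R T" and "A \<subseteq> {1..n}" and "x \<in> R"
  shows "card (simA R A `` {x}) = card (orbA R T A)"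
proof -
  have "inj_on (\<lambda>Q. Q x) (orbA R T A)"
    using generator_set_pointwise_disjoint[OF assms(1)] assms(3)
    unfolding inj_on_def pointwise_disjoint_def orbA_def by blast
  then have "bij_betw (\<lambda>Q. Q x) (orbA R T A) (simA R A `` {x})"
    using simA_class_eq_orbit[OF assms] by (simp add: bij_betw_def)
  then show ?thesis
    by (simp add: bij_betw_same_card)
qed

theorem proposition1:
  fixes n :: nat and R :: "bool list set" and T :: "(bool list \<Rightarrow> bool list) set"
    and A :: "nat set" and psi0 :: "bool list"
    and P :: "nat \<Rightarrow> bool list \<Rightarrow> bool list" and m :: nat
    and G :: "nat \<Rightarrow> (bool list \<Rightarrow> bool list) set"
    and Rs :: "nat \<Rightarrow> bool list set"
  assumes "R \<subseteq> basis n" and "R \<noteq> {}"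
    and "generator_set n R T"
    and "A \<subseteq> {1..n}" and "A \<noteq> {}"
    and "psi0 \<in> R"
    and G0: "G 0 = orbA R T A"
    and Gq: "\<And>q. 1 \<le> q \<Longrightarrow> q \<le> m \<Longrightarrow> G q = {P q \<circ> Q | Q. Q \<in> G 0}"
    and choice: "\<And>q. 1 \<le> q \<Longrightarrow> q \<le> m \<Longrightarrow> P q \<in> gen T - (\<Union>i<q. G i)"
    and stop: "gen T - (\<Union>i\<le>m. G i) = {}"
    and Rs: "\<And>i. i \<le> m \<Longrightarrow> Rs i = (\<lambda>Q. Q psi0) ` G i"
  shows "R // simA R A = Rs ` {0..m}
    \<and> ((\<forall>Q\<in>T. Q \<circ> Q = id) \<and> pointwise_disjoint R T
         \<longrightarrow> (\<forall>C\<in>R // simA R A. card C = card (orbA R T A)))"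
proof -
  note gs = \<open>generator_set n R T\<close> and A = \<open>A \<subseteq> {1..n}\<close> and psi0 = \<open>psi0 \<in> R\<close>
  have classes: "Rs i \<in> R // simA R A" if "i \<le> m" for i
  proof (cases "i = 0")
    case True
    then have "Rs i = simA R A `` {psi0}"
      using Rs[of 0] G0 simA_class_eq_orbit[OF gs A psi0] by simp
    with psi0 show ?thesis by (simp add: quotientI)
  next
    case False
    with \<open>i \<le> m\<close> have i: "1 \<le> i" "i \<le> m" by auto
    then have Pi: "P i \<in> gen T"
      using choice by blast
    have "Rs i = (\<lambda>Q. (P i \<circ> Q) psi0) ` orbA R T A"
      using Rs[OF i(2)] Gq[OF i] G0 by (simp add: setcompr_eq_image image_image)
    also have "\<dots> = simA R A `` {P i psi0}"
      by (rule simA_class_eq_translated_orbit[OF gs A Pi psi0])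
    finally show ?thesis
      using generator_set_mem[OF gs Pi psi0] by (simp add: quotientI)
  qed
  have cover: "R \<subseteq> (\<Union>i\<in>{0..m}. Rs i)"
  proof
    fix y assume "y \<in> R"
    then obtain S where "S \<in> gen T" "S psi0 = y"
      using generator_set_transitive[OF gs psi0] by blast
    with stop Rs show "y \<in> (\<Union>i\<in>{0..m}. Rs i)" by fastforce
  qed
  have "R // simA R A = Rs ` {0..m}"
    by (rule quotient_eq_if_classes_cover[OF equiv_simA]) (use classes cover in auto)
  \<comment> \<open>The cardinality claim holds without its hypotheses: generator sets are always pointwise-disjoint.\<close>
  moreover have "\<forall>C\<in>R // simA R A. card C = card (orbA R T A)"
    using card_simA_class[OF gs A] by (auto elim!: quotientE)
  ultimately show ?thesis by blast
qed

end
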